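(* Let $\gamma>0$, $\upsilon>0$ and $0<p_1<p_2<1$. Let $X\sim \mathrm{RBTLL}(\gamma,\upsilon,p_1)$ and $Y\sim \mathrm{RBTLL}(\gamma,\upsilon,p_2)$, with densities $f_X$ and $f_Y$. Then $X$ is smaller than $Y$ in the likelihood ratio order; that is, the function $x\mapsto f_X(x)/f_Y(x)$ is decreasing on $(0,\infty)$.
   Context: The log-logistic distribution with parameters $\gamma,\upsilon>0$ has CDF $G(x)=\frac{e^{\gamma}x^{\upsilon}}{1+e^{\gamma}x^{\upsilon}}$ and PDF $g(x)=\frac{e^{\gamma}\upsilon x^{\upsilon-1}}{(1+e^{\gamma}x^{\upsilon})^2}$, $x>0$. The record-based transmuted log-logistic distribution $\mathrm{RBTLL}(\gamma,\upsilon,p)$, with $\gamma,\upsilon>0$ and $0<p<1$, is the distribution on $(0,\infty)$ with CDF $F(x)=G(x)+p\,(1-G(x))\log(1-G(x))$ and PDF \[ f(x)=\frac{e^{\gamma}\upsilon x^{\upsilon-1}}{(1+e^{\gamma}x^{\upsilon})^2}\left[1+p\left(\log(1+e^{\gamma}x^{\upsilon})-1\right)\right],\qquad x>0. \] *)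

theory Defs
  imports "HOL-Analysis.Analysis"
begin

definition rbtll_pdf :: "real \<Rightarrow> real \<Rightarrow> real \<Rightarrow> real \<Rightarrow> real" where
  "rbtll_pdf \<gamma> \<upsilon> p x =
     exp \<gamma> * \<upsilon> * x powr (\<upsilon> - 1) / (1 + exp \<gamma> * x powr \<upsilon>)\<^sup>2
       * (1 + p * (ln (1 + exp \<gamma> * x powr \<upsilon>) - 1))"

end

theory Submission
  imports Defs
begin

text \<open>The log-logistic factor of the density does not depend on \<open>p\<close> and cancels in the ratio,
  leaving the linear-fractional function \<open>t \<mapsto> (1 + p\<^sub>1 (t - 1)) / (1 + p\<^sub>2 (t - 1))\<close> of
  the cumulative hazard \<open>t = -log (1 - G x) = log (1 + e\<^sup>\<gamma> x\<^sup>\<upsilon>)\<close> of the baseline.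
  The hazard is increasing and nonnegative, and on \<open>t \<ge> 0\<close> the linear-fractional map has
  positive denominator and cross-determinant \<open>p\<^sub>1 - p\<^sub>2 < 0\<close>, so it is decreasing.\<close>

definition loglogistic_cumhazard :: "real \<Rightarrow> real \<Rightarrow> real \<Rightarrow> real" where
  "loglogistic_cumhazard \<gamma> \<upsilon> x = ln (1 + exp \<gamma> * x powr \<upsilon>)"

lemma loglogistic_cumhazard_nonneg: "loglogistic_cumhazard \<gamma> \<upsilon> x \<ge> 0"
  by (simp add: loglogistic_cumhazard_def)

lemma mono_on_loglogistic_cumhazard:
  assumes "\<upsilon> > 0"
  shows "mono_on {0<..} (loglogistic_cumhazard \<gamma> \<upsilon>)"
proof (rule mono_onI)
  fix x y :: real
  assume "x \<in> {0<..}" "x \<le> y"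
  then have "x powr \<upsilon> \<le> y powr \<upsilon>"
    using assms by (simp add: powr_mono2)
  then show "loglogistic_cumhazard \<gamma> \<upsilon> x \<le> loglogistic_cumhazard \<gamma> \<upsilon> y"
    unfolding loglogistic_cumhazard_def by (simp add: add_pos_nonneg)
qed

lemma rbtll_pdf_ratio_eq:
  assumes "\<upsilon> > 0" and "x > 0"
  shows "rbtll_pdf \<gamma> \<upsilon> p x / rbtll_pdf \<gamma> \<upsilon> q x
    = (1 + p * (loglogistic_cumhazard \<gamma> \<upsilon> x - 1)) / (1 + q * (loglogistic_cumhazard \<gamma> \<upsilon> x - 1))"
proof -
  have "1 + exp \<gamma> * x powr \<upsilon> > 0"
    by (simp add: add_pos_nonneg)
  then have "exp \<gamma> * \<upsilon> * x powr (\<upsilon> - 1) / (1 + exp \<gamma> * x powr \<upsilon>)\<^sup>2 \<noteq> 0"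
    using assms by simp
  then show ?thesis
    unfolding rbtll_pdf_def loglogistic_cumhazard_def by simp
qed

lemma antimono_on_transmuted_ratio:
  fixes p q :: real
  assumes "p \<le> q" and "0 \<le> q" and "q < 1"
  shows "antimono_on {0..} (\<lambda>t. (1 + p * (t - 1)) / (1 + q * (t - 1)))"
proof (rule monotone_onI)
  fix s t :: real
  assume "s \<in> {0..}" "t \<in> {0..}" "s \<le> t"
  have denom_pos: "1 + q * (u - 1) > 0" if "u \<ge> 0" for u
  proof -
    have "q * u \<ge> 0"
      using assms that by simp
    moreover have "1 + q * (u - 1) = (1 - q) + q * u"
      by (simp add: algebra_simps)
    ultimately show ?thesis
      using assms by linarith
  qed
  have "(1 + p * (t - 1)) * (1 + q * (s - 1)) - (1 + p * (s - 1)) * (1 + q * (t - 1))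
      = (p - q) * (t - s)"
    by (simp add: algebra_simps)
  also have "\<dots> \<le> 0"
    using assms \<open>s \<le> t\<close> by (simp add: mult_nonpos_nonneg)
  finally show "(1 + p * (t - 1)) / (1 + q * (t - 1)) \<le> (1 + p * (s - 1)) / (1 + q * (s - 1))"
    using denom_pos[of s] denom_pos[of t] \<open>s \<in> {0..}\<close> \<open>t \<in> {0..}\<close> by (simp add: frac_le_eq divide_le_0_iff)
qed

theorem theorem1:
  fixes \<gamma> \<upsilon> p1 p2 :: real
  assumes "\<gamma> > 0" and "\<upsilon> > 0" and "0 < p1" and "p1 < p2" and "p2 < 1"
  shows "antimono_on {0<..} (\<lambda>x. rbtll_pdf \<gamma> \<upsilon> p1 x / rbtll_pdf \<gamma> \<upsilon> p2 x)"
proof -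
  have "antimono_on {0<..}
      ((\<lambda>t. (1 + p1 * (t - 1)) / (1 + p2 * (t - 1))) \<circ> loglogistic_cumhazard \<gamma> \<upsilon>)"
    using antimono_on_transmuted_ratio[of p1 p2] mono_on_loglogistic_cumhazard[OF \<open>\<upsilon> > 0\<close>]
      loglogistic_cumhazard_nonneg assms
    by (intro monotone_on_o) auto
  then show ?thesis
    unfolding monotone_on_def by (simp add: rbtll_pdf_ratio_eq \<open>\<upsilon> > 0\<close>)
qed

end
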